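(* Let $p\ge1$, $l\in\mathbb{Z}_{\ge0}$, and $s_1,\dots,s_p\in\mathbb{C}$ with $|s_i|<1$ or $s_i=1$ for every $1\le i\le p$. Then for every $\varepsilon>0$, $(\Delta^l\mathtt{s}^{\mathrm{sh}}_{(1,\dots,1;s_1,\dots,s_p)})(m)=O\bigl(m^{-(l+1-\varepsilon)}\bigr)$ as $m\to\infty$.
   Context: Convention $0^0=1$. $\mathtt{s}^{\mathrm{sh}}_{(1,\dots,1;s_1,\dots,s_p)}(m)=\sum_{m=m_1\ge\cdots\ge m_p\ge0}\frac{s_1^{m_1-m_2}\cdots s_{p-1}^{m_{p-1}-m_p}s_p^{m_p+1}}{(m_1+1)\cdots(m_p+1)}$; $(\Delta a)(m)=a(m)-a(m+1)$. *)

theory Defs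
  imports Complex_Main "HOL-Library.Landau_Symbols"
begin

text \<open>Index tuples m = m_1 \<ge> m_2 \<ge> ... \<ge> m_p \<ge> 0, encoded as functions
  nat \<Rightarrow> nat that vanish outside {1..p}.\<close>
definition sh_index_set :: "nat \<Rightarrow> nat \<Rightarrow> (nat \<Rightarrow> nat) set" where
  "sh_index_set p m = {mm. mm 1 = m \<and> (\<forall>i\<in>{1..<p}. mm (Suc i) \<le> mm i)
      \<and> (\<forall>i. i \<notin> {1..p} \<longrightarrow> mm i = 0)}"

text \<open>s^sh_{(1,...,1; s_1,...,s_p)}(m); the parameters s_i are s 1, ..., s p.
  Isabelle's power satisfies 0^0 = 1.\<close>
definition ssh :: "nat \<Rightarrow> (nat \<Rightarrow> complex) \<Rightarrow> nat \<Rightarrow> complex" where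
  "ssh p s m = (\<Sum>mm\<in>sh_index_set p m.
      (\<Prod>i\<in>{1..<p}. s i ^ (mm i - mm (Suc i))) * s p ^ (mm p + 1)
        / (\<Prod>i\<in>{1..p}. of_nat (mm i + 1)))"

definition fwd_diff :: "(nat \<Rightarrow> complex) \<Rightarrow> nat \<Rightarrow> complex" where
  "fwd_diff a m = a m - a (Suc m)"

end

theory Submission
  imports Defs "HOL-Real_Asymp.Real_Asymp" "HOL-Analysis.Summation_Tests"
begin

(* Say that a sequence a decays with order alpha if (Delta^j a)(m) = O(m^(eps - j - alpha)) for every
   j and every eps > 0. Splitting off the outermost index m_1 = m gives the recursion
     s^sh_{p+1}(m) = 1/(m+1) * sum_{k<=m} s_1^(m-k) s^sh_p(k),
   the inner sequence having the shifted parameters s_2, ..., s_{p+1}. Orders add under products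
   (Leibniz rule for Delta), 1/(m+1) has order 1 and s^m has order 0; convolution with s^m keeps the
   order when |s| < 1, and for s = 1 it is a partial sum, which lowers order 1 to order 0. By
   induction on p, s^sh decays with order 1. *)

lemma summable_geometric_times_powr:
  fixes r c :: real
  assumes "0 \<le> r" "r < 1"
  shows "summable (\<lambda>n. r ^ n * (real n + 1) powr c)"
proof -
  \<comment> \<open>\<open>real_asymp\<close> needs a positive base, and \<open>r\<close> may be \<open>0\<close>.\<close>
  define r' where "r' = max r (1/2)"
  have r': "0 < r'" "r' < 1" "r \<le> r'" using assms by (auto simp: r'_def)
  have "summable (\<lambda>n. r' ^ n * (real n + 1) powr c)"
  proof (rule summable_comparison_test_bigo)
    show "summable (\<lambda>n. norm (((1 + r') / 2) ^ n))"
      using r' by (simp add: norm_power summable_geometric_iff)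
    show "(\<lambda>n. r' ^ n * (real n + 1) powr c) \<in> O(\<lambda>n. ((1 + r') / 2) ^ n)"
      using r' by real_asymp
  qed
  then show ?thesis
    by (rule summable_comparison_test[rotated])
      (use assms r' in \<open>auto intro!: exI[of _ 0] mult_right_mono power_mono\<close>)
qed

lemma summable_powr_Suc:
  fixes d :: real
  assumes "0 < d"
  shows "summable (\<lambda>n. (real n + 1) powr (- 1 - d))"
  using summable_real_powr_iff[of "- 1 - d"] assms summable_Suc_iff[of "\<lambda>n. real n powr (- 1 - d)"]
  by (simp add: add.commute)

section \<open>Bounds by powers of \<open>m + 1\<close>\<close>

\<comment> \<open>Bounding by \<open>(m + 1) powr g\<close> rather than \<open>m powr g\<close> keeps the bound meaningful at \<open>m = 0\<close>, where \<open>0 powr g = 0\<close>.\<close>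
definition powr_bounded :: "real \<Rightarrow> (nat \<Rightarrow> complex) \<Rightarrow> bool" where
  "powr_bounded g a \<longleftrightarrow> (\<exists>K. \<forall>m. norm (a m) \<le> K * (real m + 1) powr g)"

lemma powr_boundedI: "(\<And>m. norm (a m) \<le> K * (real m + 1) powr g) \<Longrightarrow> powr_bounded g a"
  unfolding powr_bounded_def by blast

lemma powr_boundedE:
  assumes "powr_bounded g a"
  obtains K where "K \<ge> 0" "\<And>m. norm (a m) \<le> K * (real m + 1) powr g"
proof -
  obtain K where K: "\<And>m. norm (a m) \<le> K * (real m + 1) powr g"
    using assms unfolding powr_bounded_def by blast
  have "K \<ge> 0"
    using order_trans[OF norm_ge_zero K[of 0]] by (simp add: zero_le_mult_iff)
  from this K show ?thesis by (rule that)
qed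

lemma powr_bounded_mono:
  assumes "powr_bounded g a" "g \<le> h"
  shows "powr_bounded h a"
proof -
  obtain K where "K \<ge> 0" and K: "\<And>m. norm (a m) \<le> K * (real m + 1) powr g"
    using powr_boundedE[OF assms(1)] by blast
  have "norm (a m) \<le> K * (real m + 1) powr h" for m
    using K[of m] \<open>K \<ge> 0\<close> assms(2) by (smt (verit) mult_left_mono powr_mono of_nat_0_le_iff)
  then show ?thesis by (rule powr_boundedI)
qed

lemma powr_bounded_add:
  assumes "powr_bounded g a" "powr_bounded g b"
  shows "powr_bounded g (\<lambda>m. a m + b m)"
proof -
  obtain K where "K \<ge> 0" and K: "\<And>m. norm (a m) \<le> K * (real m + 1) powr g"
    using powr_boundedE[OF assms(1)] by blast
  obtain L where "L \<ge> 0" and L: "\<And>m. norm (b m) \<le> L * (real m + 1) powr g"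
    using powr_boundedE[OF assms(2)] by blast
  have "norm (a m + b m) \<le> (K + L) * (real m + 1) powr g" for m
    using norm_triangle_ineq[of "a m" "b m"] K[of m] L[of m] by (simp add: distrib_right)
  then show ?thesis by (rule powr_boundedI)
qed

lemma powr_bounded_cmult:
  assumes "powr_bounded g a"
  shows "powr_bounded g (\<lambda>m. c * a m)"
proof -
  obtain K where "K \<ge> 0" and K: "\<And>m. norm (a m) \<le> K * (real m + 1) powr g"
    using powr_boundedE[OF assms] by blast
  have "norm (c * a m) \<le> (norm c * K) * (real m + 1) powr g" for m
    using mult_left_mono[OF K[of m], of "norm c"] by (simp add: norm_mult mult.assoc)
  then show ?thesis by (rule powr_boundedI)
qed

lemma powr_bounded_mult:
  assumes "powr_bounded g a" "powr_bounded h b"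
  shows "powr_bounded (g + h) (\<lambda>m. a m * b m)"
proof -
  obtain K where "K \<ge> 0" and K: "\<And>m. norm (a m) \<le> K * (real m + 1) powr g"
    using powr_boundedE[OF assms(1)] by blast
  obtain L where "L \<ge> 0" and L: "\<And>m. norm (b m) \<le> L * (real m + 1) powr h"
    using powr_boundedE[OF assms(2)] by blast
  have "norm (a m * b m) \<le> (K * L) * (real m + 1) powr (g + h)" for m
  proof -
    have "norm (a m * b m) \<le> (K * (real m + 1) powr g) * (L * (real m + 1) powr h)"
      unfolding norm_mult using K[of m] L[of m] \<open>K \<ge> 0\<close> by (intro mult_mono) auto
    then show ?thesis by (simp add: powr_add algebra_simps)
  qed
  then show ?thesis by (rule powr_boundedI)
qed

lemma powr_add_one_le:
  fixes x g :: real
  assumes "1 \<le> x"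
  shows "(x + 1) powr g \<le> max 1 (2 powr g) * x powr g"
proof (cases "g \<ge> 0")
  case True
  have "(x + 1) powr g \<le> (2 * x) powr g"
    using True assms by (intro powr_mono2) auto
  also have "\<dots> = 2 powr g * x powr g" using assms by (simp add: powr_mult)
  also have "\<dots> \<le> max 1 (2 powr g) * x powr g" by (intro mult_right_mono) auto
  finally show ?thesis .
next
  case False
  have "(x + 1) powr g \<le> x powr g"
    using False assms by (intro powr_mono2') auto
  also have "\<dots> \<le> max 1 (2 powr g) * x powr g"
    using mult_right_mono[of 1 "max 1 (2 powr g)" "x powr g"] by simp
  finally show ?thesis .
qed

lemma powr_bounded_shift:
  assumes "powr_bounded g a"
  shows "powr_bounded g (\<lambda>m. a (Suc m))"
proof -
  obtain K where "K \<ge> 0" and K: "\<And>m. norm (a m) \<le> K * (real m + 1) powr g"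
    using powr_boundedE[OF assms] by blast
  have "norm (a (Suc m)) \<le> (K * max 1 (2 powr g)) * (real m + 1) powr g" for m
  proof -
    have "norm (a (Suc m)) \<le> K * ((real m + 1) + 1) powr g"
      using K[of "Suc m"] by (simp add: add_ac)
    also have "\<dots> \<le> K * (max 1 (2 powr g) * (real m + 1) powr g)"
      using \<open>K \<ge> 0\<close> by (intro mult_left_mono powr_add_one_le) auto
    finally show ?thesis by (simp add: mult.assoc)
  qed
  then show ?thesis by (rule powr_boundedI)
qed

lemma powr_bounded_power:
  assumes "norm s < 1"
  shows "powr_bounded g (\<lambda>m. s ^ m)"
proof -
  have sm: "summable (\<lambda>n. norm s ^ n * (real n + 1) powr (- g))"
    using assms by (intro summable_geometric_times_powr) auto
  define B where "B = (\<Sum>n. norm s ^ n * (real n + 1) powr (- g))"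
  have "norm (s ^ m) \<le> B * (real m + 1) powr g" for m
  proof -
    have "norm s ^ m * (real m + 1) powr (- g) \<le> B"
      using sum_le_suminf[OF sm, of "{m}"] unfolding B_def by simp
    then have "norm s ^ m * (real m + 1) powr (- g) * (real m + 1) powr g \<le> B * (real m + 1) powr g"
      by (rule mult_right_mono) auto
    then show ?thesis by (simp add: norm_power mult.assoc powr_add[symmetric])
  qed
  then show ?thesis by (rule powr_boundedI)
qed

lemma powr_bounded_imp_bigo:
  assumes "powr_bounded g a"
  shows "(\<lambda>m. norm (a m)) \<in> O(\<lambda>m. real m powr g)"
proof -
  obtain K where "K \<ge> 0" and K: "\<And>m. norm (a m) \<le> K * (real m + 1) powr g"
    using powr_boundedE[OF assms] by blast
  have "(\<lambda>m. norm (a m)) \<in> O(\<lambda>m. (real m + 1) powr g)"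
    using K by (intro bigoI[of _ K] always_eventually) auto
  also have "(\<lambda>m. (real m + 1) powr g) \<in> O(\<lambda>m. real m powr g)"
    by real_asymp
  finally show ?thesis .
qed

definition geom_conv :: "complex \<Rightarrow> (nat \<Rightarrow> complex) \<Rightarrow> nat \<Rightarrow> complex" where
  "geom_conv s h m = (\<Sum>k\<le>m. s ^ (m - k) * h k)"

lemma powr_le_mult_powr_abs:
  fixes x y g :: real
  assumes "1 \<le> y" "y \<le> x"
  shows "y powr g \<le> x powr g * (x - y + 1) powr \<bar>g\<bar>"
proof (cases "g \<ge> 0")
  case True
  have "y powr g \<le> x powr g" using assms True by (intro powr_mono2) auto
  also have "\<dots> \<le> x powr g * (x - y + 1) powr \<bar>g\<bar>"
    using assms mult_left_mono[of 1 "(x - y + 1) powr \<bar>g\<bar>" "x powr g"]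
    by (simp add: ge_one_powr_ge_zero)
  finally show ?thesis .
next
  case False
  have "x \<le> y * (x - y + 1)"
    using mult_right_mono[of 1 y "x - y"] assms by (simp add: algebra_simps)
  then have "x powr (- g) \<le> y powr (- g) * (x - y + 1) powr (- g)"
    using False assms by (subst powr_mult[symmetric]) (auto intro: powr_mono2)
  then have "y powr g * x powr (- g) * x powr g
      \<le> y powr g * (y powr (- g) * (x - y + 1) powr (- g)) * x powr g"
    by (intro mult_right_mono mult_left_mono) auto
  then show ?thesis
    using False assms by (simp add: powr_minus field_simps)
qed

lemma powr_bounded_geom_conv:
  assumes s: "norm s < 1" and h: "powr_bounded g h"
  shows "powr_bounded g (geom_conv s h)"
proof -
  obtain K where "K \<ge> 0" and K: "\<And>m. norm (h m) \<le> K * (real m + 1) powr g"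
    using powr_boundedE[OF h] by blast
  have sm: "summable (\<lambda>d. norm s ^ d * (real d + 1) powr \<bar>g\<bar>)"
    using s by (intro summable_geometric_times_powr) auto
  define S where "S = (\<Sum>d. norm s ^ d * (real d + 1) powr \<bar>g\<bar>)"
  have "norm (geom_conv s h m) \<le> (K * S) * (real m + 1) powr g" for m
  proof -
    have "norm (geom_conv s h m) \<le> (\<Sum>k\<le>m. norm s ^ (m - k) * (K * (real k + 1) powr g))"
      unfolding geom_conv_def
      by (rule order_trans[OF norm_sum], intro sum_mono)
        (use K in \<open>auto simp: norm_mult norm_power intro!: mult_left_mono\<close>)
    also have "\<dots> \<le> (\<Sum>k\<le>m. norm s ^ (m - k) *
        (K * ((real m + 1) powr g * (real (m - k) + 1) powr \<bar>g\<bar>)))"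
      using \<open>K \<ge> 0\<close> powr_le_mult_powr_abs[of "real k + 1" "real m + 1" g for k]
      by (intro sum_mono mult_left_mono) (auto simp: of_nat_diff)
    also have "\<dots> = K * (real m + 1) powr g * (\<Sum>k\<le>m. norm s ^ (m - k) * (real (m - k) + 1) powr \<bar>g\<bar>)"
      by (simp add: sum_distrib_left algebra_simps)
    also have "(\<Sum>k\<le>m. norm s ^ (m - k) * (real (m - k) + 1) powr \<bar>g\<bar>)
        = (\<Sum>d\<le>m. norm s ^ d * (real d + 1) powr \<bar>g\<bar>)"
      by (rule sum.reindex_bij_witness[of _ "\<lambda>k. m - k" "\<lambda>k. m - k"]) auto
    also have "K * (real m + 1) powr g * \<dots> \<le> K * (real m + 1) powr g * S"
      unfolding S_def using \<open>K \<ge> 0\<close> by (intro mult_left_mono sum_le_suminf sm) auto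
    finally show ?thesis by (simp add: algebra_simps)
  qed
  then show ?thesis by (rule powr_boundedI)
qed

lemma powr_bounded_partial_sums:
  assumes d: "0 < d" and h: "powr_bounded (d - 1) h"
  shows "powr_bounded (2 * d) (\<lambda>m. \<Sum>k\<le>m. h k)"
proof -
  obtain K where "K \<ge> 0" and K: "\<And>m. norm (h m) \<le> K * (real m + 1) powr (d - 1)"
    using powr_boundedE[OF h] by blast
  have sm: "summable (\<lambda>k. (real k + 1) powr (- 1 - d))"
    using d by (rule summable_powr_Suc)
  define S where "S = (\<Sum>k. (real k + 1) powr (- 1 - d))"
  have "norm (\<Sum>k\<le>m. h k) \<le> (K * S) * (real m + 1) powr (2 * d)" for m
  proof -
    have "norm (\<Sum>k\<le>m. h k) \<le> (\<Sum>k\<le>m. K * ((real m + 1) powr (2 * d) * (real k + 1) powr (- 1 - d)))"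
    proof (rule order_trans[OF norm_sum], intro sum_mono)
      fix k assume "k \<in> {..m}"
      then have "(real k + 1) powr (2 * d) \<le> (real m + 1) powr (2 * d)"
        using d by (intro powr_mono2) auto
      moreover have "(real k + 1) powr (d - 1) = (real k + 1) powr (2 * d) * (real k + 1) powr (- 1 - d)"
        by (simp add: powr_add[symmetric])
      ultimately have "(real k + 1) powr (d - 1) \<le> (real m + 1) powr (2 * d) * (real k + 1) powr (- 1 - d)"
        by (simp add: mult_right_mono)
      then show "norm (h k) \<le> K * ((real m + 1) powr (2 * d) * (real k + 1) powr (- 1 - d))"
        using K[of k] \<open>K \<ge> 0\<close> by (meson mult_left_mono order_trans)
    qed
    also have "\<dots> = K * (real m + 1) powr (2 * d) * (\<Sum>k\<le>m. (real k + 1) powr (- 1 - d))"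
      by (simp add: sum_distrib_left mult.assoc)
    also have "\<dots> \<le> K * (real m + 1) powr (2 * d) * S"
      unfolding S_def using \<open>K \<ge> 0\<close> by (intro mult_left_mono sum_le_suminf sm) auto
    finally show ?thesis by (simp add: algebra_simps)
  qed
  then show ?thesis by (rule powr_boundedI)
qed

section \<open>Forward differences\<close>

lemma fwd_diff_iter_Suc: "(fwd_diff ^^ Suc j) a = (fwd_diff ^^ j) (fwd_diff a)"
  by (simp add: funpow_Suc_right del: funpow.simps)

lemma fwd_diff_iter_add:
  "(fwd_diff ^^ j) (\<lambda>m. a m + b m) = (\<lambda>m. (fwd_diff ^^ j) a m + (fwd_diff ^^ j) b m)"
  by (induction j) (auto simp: fwd_diff_def fun_eq_iff)

lemma fwd_diff_iter_cmult: "(fwd_diff ^^ j) (\<lambda>m. c * a m) = (\<lambda>m. c * (fwd_diff ^^ j) a m)"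
  by (induction j) (auto simp: fwd_diff_def fun_eq_iff algebra_simps)

lemma fwd_diff_iter_shift: "(fwd_diff ^^ j) (\<lambda>m. a (Suc m)) = (\<lambda>m. (fwd_diff ^^ j) a (Suc m))"
  by (induction j) (auto simp: fwd_diff_def fun_eq_iff)

lemma fwd_diff_iter_power: "(fwd_diff ^^ j) (\<lambda>m. s ^ m) = (\<lambda>m. (1 - s) ^ j * s ^ m)"
  by (induction j) (auto simp: fwd_diff_def fun_eq_iff algebra_simps)

lemma fwd_diff_mult:
  "fwd_diff (\<lambda>m. a m * b m) = (\<lambda>m. fwd_diff a m * b m + a (Suc m) * fwd_diff b m)"
  by (auto simp: fwd_diff_def fun_eq_iff algebra_simps)

lemma fwd_diff_iter_inverse:
  "(fwd_diff ^^ j) (\<lambda>m. 1 / (of_nat m + 1)) = (\<lambda>m. fact j / of_nat (pochhammer (Suc m) (Suc j)))"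
proof (induction j)
  case 0
  show ?case by (simp add: fun_eq_iff)
next
  case (Suc j)
  have "fact j / of_nat (pochhammer (Suc m) (Suc j)) - fact j / of_nat (pochhammer (Suc (Suc m)) (Suc j))
      = (fact (Suc j) / of_nat (pochhammer (Suc m) (Suc (Suc j))) :: complex)" for m
  proof -
    define P Q R where "P = pochhammer (Suc m) (Suc j)" and "Q = pochhammer (Suc (Suc m)) (Suc j)"
      and "R = pochhammer (Suc m) (Suc (Suc j))"
    have RP: "R = P * (m + j + 2)"
      unfolding R_def P_def by (subst pochhammer_Suc) simp
    have RQ: "R = Suc m * Q"
      unfolding R_def Q_def by (subst pochhammer_rec) simp
    have "fact j / of_nat P = fact j * of_nat (m + j + 2) / (of_nat R :: complex)"
      unfolding RP of_nat_mult by (rule mult_divide_mult_cancel_right[symmetric]) (simp only: of_nat_eq_0_iff)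
    moreover have "fact j / of_nat Q = of_nat (Suc m) * fact j / (of_nat R :: complex)"
      unfolding RQ of_nat_mult by (rule mult_divide_mult_cancel_left[symmetric]) (simp only: of_nat_eq_0_iff)
    ultimately show ?thesis
      unfolding P_def[symmetric] Q_def[symmetric] R_def[symmetric]
      by (simp add: diff_divide_distrib[symmetric] algebra_simps)
  qed
  then show ?case
    by (simp only: funpow.simps o_apply Suc.IH) (simp add: fwd_diff_def fun_eq_iff)
qed

lemma fwd_diff_partial_sums: "fwd_diff (\<lambda>m. \<Sum>k\<le>m. h k) = (\<lambda>m. - h (Suc m))"
  by (simp add: fwd_diff_def fun_eq_iff)

lemma fwd_diff_geom_conv:
  "fwd_diff (geom_conv s h) = (\<lambda>m. geom_conv s (fwd_diff h) m - h 0 * s * s ^ m)"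
proof (rule ext)
  fix m
  have "geom_conv s h (Suc m) = s ^ Suc m * h 0 + (\<Sum>k\<le>m. s ^ (m - k) * h (Suc k))"
    unfolding geom_conv_def by (subst sum.atMost_Suc_shift) simp
  moreover have "geom_conv s (fwd_diff h) m = geom_conv s h m - (\<Sum>k\<le>m. s ^ (m - k) * h (Suc k))"
    unfolding geom_conv_def fwd_diff_def by (simp add: algebra_simps sum_subtractf)
  ultimately show "fwd_diff (geom_conv s h) m = geom_conv s (fwd_diff h) m - h 0 * s * s ^ m"
    unfolding fwd_diff_def[of "geom_conv s h"] by (simp add: algebra_simps)
qed

lemma fwd_diff_iter_geom_conv:
  "\<exists>c. (fwd_diff ^^ j) (geom_conv s h) = (\<lambda>m. geom_conv s ((fwd_diff ^^ j) h) m + c * s ^ m)"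
proof (induction j arbitrary: h)
  case 0
  show ?case by (auto intro: exI[of _ 0])
next
  case (Suc j)
  obtain c where c: "(fwd_diff ^^ j) (geom_conv s (fwd_diff h))
      = (\<lambda>m. geom_conv s ((fwd_diff ^^ j) (fwd_diff h)) m + c * s ^ m)"
    using Suc.IH by blast
  have "(fwd_diff ^^ Suc j) (geom_conv s h)
      = (fwd_diff ^^ j) (\<lambda>m. geom_conv s (fwd_diff h) m + (- h 0 * s) * s ^ m)"
    unfolding fwd_diff_iter_Suc fwd_diff_geom_conv by simp
  also have "\<dots> = (\<lambda>m. geom_conv s ((fwd_diff ^^ Suc j) h) m + (c - h 0 * s * (1 - s) ^ j) * s ^ m)"
    unfolding fwd_diff_iter_add fwd_diff_iter_cmult fwd_diff_iter_power c fwd_diff_iter_Suc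
    by (simp add: algebra_simps)
  finally show ?case by blast
qed

section \<open>Decay classes\<close>

definition diff_decay :: "real \<Rightarrow> (nat \<Rightarrow> complex) \<Rightarrow> bool" where
  "diff_decay \<alpha> a \<longleftrightarrow> (\<forall>j e. 0 < e \<longrightarrow> powr_bounded (e - (real j + \<alpha>)) ((fwd_diff ^^ j) a))"

lemma diff_decayI:
  "(\<And>j e. 0 < e \<Longrightarrow> powr_bounded (e - (real j + \<alpha>)) ((fwd_diff ^^ j) a)) \<Longrightarrow> diff_decay \<alpha> a"
  unfolding diff_decay_def by blast

lemma diff_decayD:
  "diff_decay \<alpha> a \<Longrightarrow> 0 < e \<Longrightarrow> powr_bounded (e - (real j + \<alpha>)) ((fwd_diff ^^ j) a)"
  unfolding diff_decay_def by blast

lemma diff_decay_mono: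
  assumes "diff_decay \<alpha> a" "\<beta> \<le> \<alpha>"
  shows "diff_decay \<beta> a"
  using assms(2) by (intro diff_decayI powr_bounded_mono[OF diff_decayD[OF assms(1)]]) auto

lemma diff_decay_shift:
  assumes "diff_decay \<alpha> a"
  shows "diff_decay \<alpha> (\<lambda>m. a (Suc m))"
  by (rule diff_decayI, unfold fwd_diff_iter_shift) (intro powr_bounded_shift diff_decayD[OF assms])

lemma diff_decay_fwd_diff: "diff_decay \<alpha> a \<Longrightarrow> diff_decay (\<alpha> + 1) (fwd_diff a)"
proof (rule diff_decayI)
  fix j :: nat and e :: real
  assume "diff_decay \<alpha> a" "0 < e"
  then have "powr_bounded (e - (real (Suc j) + \<alpha>)) ((fwd_diff ^^ j) (fwd_diff a))"
    unfolding fwd_diff_iter_Suc[symmetric] by (rule diff_decayD)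
  then show "powr_bounded (e - (real j + (\<alpha> + 1))) ((fwd_diff ^^ j) (fwd_diff a))"
    by (simp add: algebra_simps)
qed

lemma diff_decay_cmult:
  assumes "diff_decay \<alpha> a"
  shows "diff_decay \<alpha> (\<lambda>m. c * a m)"
  by (rule diff_decayI, unfold fwd_diff_iter_cmult) (intro powr_bounded_cmult diff_decayD[OF assms])

lemma powr_bounded_fwd_diff_iter_mult:
  assumes "diff_decay \<alpha> a" "diff_decay \<beta> b" "0 < e"
  shows "powr_bounded (e - (real j + (\<alpha> + \<beta>))) ((fwd_diff ^^ j) (\<lambda>m. a m * b m))"
  using assms(1,2)
proof (induction j arbitrary: a b \<alpha> \<beta>)
  case 0
  have "powr_bounded ((e/2 - (0 + \<alpha>)) + (e/2 - (0 + \<beta>))) (\<lambda>m. a m * b m)"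
    using diff_decayD[OF "0.prems"(1), of "e/2" 0] diff_decayD[OF "0.prems"(2), of "e/2" 0] \<open>0 < e\<close>
    by (intro powr_bounded_mult) auto
  then show ?case by (simp add: algebra_simps)
next
  case (Suc j)
  \<comment> \<open>Leibniz rule: \<open>\<Delta>(ab) = (\<Delta>a) b + a(\<cdot>+1) \<Delta>b\<close>; each summand gains one order of decay.\<close>
  have "powr_bounded (e - (real j + ((\<alpha> + 1) + \<beta>))) ((fwd_diff ^^ j) (\<lambda>m. fwd_diff a m * b m))"
    using Suc.prems by (intro Suc.IH diff_decay_fwd_diff)
  moreover have "powr_bounded (e - (real j + (\<alpha> + (\<beta> + 1))))
      ((fwd_diff ^^ j) (\<lambda>m. a (Suc m) * fwd_diff b m))"
    using Suc.prems by (intro Suc.IH diff_decay_shift diff_decay_fwd_diff)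
  ultimately show ?case
    unfolding fwd_diff_iter_Suc fwd_diff_mult fwd_diff_iter_add
    by (intro powr_bounded_add) (simp_all add: algebra_simps)
qed

lemma diff_decay_mult:
  assumes "diff_decay \<alpha> a" "diff_decay \<beta> b"
  shows "diff_decay (\<alpha> + \<beta>) (\<lambda>m. a m * b m)"
  by (intro diff_decayI powr_bounded_fwd_diff_iter_mult[OF assms])

lemma diff_decay_inverse: "diff_decay 1 (\<lambda>m. 1 / (of_nat m + 1))"
proof (rule diff_decayI)
  fix j :: nat and e :: real
  assume "0 < e"
  have "norm ((fwd_diff ^^ j) (\<lambda>m. 1 / (of_nat m + 1)) m) \<le> fact j * (real m + 1) powr (e - (real j + 1))"
    for m
  proof -
    have "(real m + 1) ^ Suc j = (\<Prod>i<Suc j. real m + 1)"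
      by simp
    also have "\<dots> \<le> (\<Prod>i<Suc j. real m + 1 + real i)"
      by (intro prod_mono) auto
    also have "\<dots> = real (pochhammer (Suc m) (Suc j))"
      by (simp add: pochhammer_prod atLeast0LessThan algebra_simps)
    finally have "(real m + 1) ^ Suc j \<le> real (pochhammer (Suc m) (Suc j))" .
    then have "fact j / real (pochhammer (Suc m) (Suc j)) \<le> fact j / (real m + 1) ^ Suc j"
      using pochhammer_pos[of "Suc m" "Suc j"] by (intro divide_left_mono) auto
    also have "\<dots> = fact j * (real m + 1) powr (- real (Suc j))"
      by (subst powr_minus, subst powr_realpow) (auto simp: divide_inverse)
    also have "\<dots> \<le> fact j * (real m + 1) powr (e - (real j + 1))"
      using \<open>0 < e\<close> by (intro mult_left_mono powr_mono) auto
    finally show ?thesis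
      by (simp add: fwd_diff_iter_inverse norm_divide norm_fact)
  qed
  then show "powr_bounded (e - (real j + 1)) ((fwd_diff ^^ j) (\<lambda>m. 1 / (of_nat m + 1)))"
    by (rule powr_boundedI)
qed

lemma diff_decay_power:
  assumes "norm s < 1 \<or> s = 1"
  shows "diff_decay 0 (\<lambda>m. s ^ m)"
proof (cases "s = 1")
  case True
  have "norm ((fwd_diff ^^ j) (\<lambda>m. s ^ m) m) \<le> 1 * (real m + 1) powr (e - (real j + 0))"
    if "0 < e" for j e m
    unfolding fwd_diff_iter_power using that True by (cases j) (simp_all add: ge_one_powr_ge_zero)
  then show ?thesis by (blast intro: diff_decayI powr_boundedI)
next
  case False
  then have "norm s < 1" using assms by simp
  then show ?thesis
    by (intro diff_decayI, unfold fwd_diff_iter_power) (intro powr_bounded_cmult powr_bounded_power)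
qed

lemma diff_decay_geom_conv:
  assumes "norm s < 1" "diff_decay \<alpha> h"
  shows "diff_decay \<alpha> (geom_conv s h)"
proof (rule diff_decayI)
  fix j :: nat and e :: real
  assume "0 < e"
  obtain c where "(fwd_diff ^^ j) (geom_conv s h) = (\<lambda>m. geom_conv s ((fwd_diff ^^ j) h) m + c * s ^ m)"
    using fwd_diff_iter_geom_conv by blast
  then show "powr_bounded (e - (real j + \<alpha>)) ((fwd_diff ^^ j) (geom_conv s h))"
    using assms(1) \<open>0 < e\<close>
    by (simp only:) (intro powr_bounded_add powr_bounded_geom_conv powr_bounded_cmult
        powr_bounded_power diff_decayD[OF assms(2)])
qed

lemma diff_decay_partial_sums:
  assumes "diff_decay 1 h"
  shows "diff_decay 0 (\<lambda>m. \<Sum>k\<le>m. h k)"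
proof (rule diff_decayI)
  fix j :: nat and e :: real
  assume "0 < e"
  show "powr_bounded (e - (real j + 0)) ((fwd_diff ^^ j) (\<lambda>m. \<Sum>k\<le>m. h k))"
  proof (cases j)
    case 0
    \<comment> \<open>Summing loses a logarithm, which the halved \<open>e\<close> absorbs.\<close>
    have "powr_bounded (e / 2 - (real 0 + 1)) h"
      using diff_decayD[OF assms, of "e / 2" 0] \<open>0 < e\<close> by simp
    then have "powr_bounded (2 * (e / 2)) (\<lambda>m. \<Sum>k\<le>m. h k)"
      using \<open>0 < e\<close> by (intro powr_bounded_partial_sums) auto
    with 0 show ?thesis by simp
  next
    case (Suc i)
    have "diff_decay 1 (\<lambda>m. (- 1) * h (Suc m))"
      using assms by (intro diff_decay_cmult diff_decay_shift)
    then have "powr_bounded (e - (real i + 1)) ((fwd_diff ^^ i) (\<lambda>m. (- 1) * h (Suc m)))"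
      using \<open>0 < e\<close> by (rule diff_decayD)
    with Suc show ?thesis
      by (simp add: fwd_diff_iter_Suc fwd_diff_partial_sums add_ac del: funpow.simps)
  qed
qed

lemma diff_decay_imp_bigo:
  assumes "diff_decay \<alpha> a" "0 < e"
  shows "(\<lambda>m. norm ((fwd_diff ^^ j) a m)) \<in> O(\<lambda>m. real m powr (- (real j + \<alpha> - e)))"
  using powr_bounded_imp_bigo[OF diff_decayD[OF assms]] by simp

section \<open>The recursion in the depth\<close>

\<comment> \<open>The index tuple \<open>(m, mm 1, mm 2, \<dots>)\<close>, in the encoding of \<open>sh_index_set\<close> (entry \<open>0\<close> unused).\<close>
definition sh_cons :: "nat \<Rightarrow> (nat \<Rightarrow> nat) \<Rightarrow> nat \<Rightarrow> nat" where
  "sh_cons m mm = (\<lambda>i. if i = 0 then 0 else if i = 1 then m else mm (i - 1))"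

lemma sh_index_set_one: "sh_index_set 1 m = {\<lambda>i. if i = 1 then m else 0}"
  unfolding sh_index_set_def by (auto simp: fun_eq_iff)

lemma sh_index_set_Suc:
  assumes "1 \<le> q"
  shows "sh_index_set (Suc q) m = (\<lambda>(k, mm). sh_cons m mm) ` (SIGMA k:{..m}. sh_index_set q k)"
proof (intro equalityI subsetI)
  fix mm assume "mm \<in> sh_index_set (Suc q) m"
  then have m1: "mm 1 = m" and mono: "\<forall>i\<in>{1..<Suc q}. mm (Suc i) \<le> mm i"
    and supp: "\<forall>i. i \<notin> {1..Suc q} \<longrightarrow> mm i = 0"
    by (auto simp: sh_index_set_def)
  define mm' where "mm' = (\<lambda>i. if i = 0 then 0 else mm (Suc i))"
  have "mm 2 \<le> m" using mono assms m1 by (auto simp: numeral_2_eq_2)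
  moreover have "mm' \<in> sh_index_set q (mm 2)"
    unfolding sh_index_set_def mm'_def using mono supp by (auto simp: numeral_2_eq_2)
  moreover have "sh_cons m mm' = mm"
    unfolding sh_cons_def mm'_def using supp m1 by (auto simp: fun_eq_iff)
  ultimately show "mm \<in> (\<lambda>(k, mm). sh_cons m mm) ` (SIGMA k:{..m}. sh_index_set q k)"
    by (intro image_eqI[of _ _ "(mm 2, mm')"]) auto
next
  fix x assume "x \<in> (\<lambda>(k, mm). sh_cons m mm) ` (SIGMA k:{..m}. sh_index_set q k)"
  then obtain k mm where k: "k \<le> m" and x: "x = sh_cons m mm"
    and m1: "mm 1 = k" and mono: "\<forall>i\<in>{1..<q}. mm (Suc i) \<le> mm i"
    and supp: "\<forall>i. i \<notin> {1..q} \<longrightarrow> mm i = 0"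
    by (auto simp: sh_index_set_def)
  have "sh_cons m mm (Suc i) \<le> sh_cons m mm i" if i: "i \<in> {1..<Suc q}" for i
  proof (cases "i = 1")
    case True
    then show ?thesis using m1 k by (simp add: sh_cons_def)
  next
    case False
    then have "i - 1 \<in> {1..<q}" "Suc (i - 1) = i" using i by auto
    then show ?thesis using mono False by (force simp: sh_cons_def)
  qed
  moreover have "sh_cons m mm i = 0" if "i \<notin> {1..Suc q}" for i
  proof -
    have "i = 0 \<or> (i - 1 \<notin> {1..q} \<and> i \<noteq> 1)" using that by auto
    then show ?thesis using supp by (auto simp: sh_cons_def)
  qed
  ultimately show "x \<in> sh_index_set (Suc q) m"
    unfolding x sh_index_set_def by (simp add: sh_cons_def)
qed

lemma inj_on_sh_cons:
  "inj_on (\<lambda>(k, mm). sh_cons m mm) (SIGMA k:{..m}. sh_index_set q k)"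
proof (rule inj_onI, clarsimp)
  fix k mm k' mm'
  assume mm: "mm \<in> sh_index_set q k" and mm': "mm' \<in> sh_index_set q k'"
    and eq: "sh_cons m mm = sh_cons m mm'"
  have "mm i = mm' i" for i
  proof (cases "i = 0")
    case True
    then show ?thesis using mm mm' by (simp add: sh_index_set_def)
  next
    case False
    then show ?thesis using fun_cong[OF eq, of "Suc i"] by (simp add: sh_cons_def)
  qed
  moreover have "k = mm 1" "k' = mm' 1" using mm mm' by (simp_all add: sh_index_set_def)
  ultimately show "k = k' \<and> mm = mm'" by auto
qed

lemma finite_sh_index_set: "1 \<le> q \<Longrightarrow> finite (sh_index_set q m)"
proof (induction q arbitrary: m rule: dec_induct)
  case base
  show ?case using sh_index_set_one by simp
next
  case (step q)
  then show ?case by (simp add: sh_index_set_Suc)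
qed

definition ssh_term :: "nat \<Rightarrow> (nat \<Rightarrow> complex) \<Rightarrow> (nat \<Rightarrow> nat) \<Rightarrow> complex" where
  "ssh_term p s mm = (\<Prod>i\<in>{1..<p}. s i ^ (mm i - mm (Suc i))) * s p ^ (mm p + 1)
      / (\<Prod>i\<in>{1..p}. of_nat (mm i + 1))"

lemma ssh_eq_sum_ssh_term: "ssh p s m = (\<Sum>mm\<in>sh_index_set p m. ssh_term p s mm)"
  unfolding ssh_def ssh_term_def ..

lemma ssh_one: "ssh 1 s = (\<lambda>m. 1 / (of_nat m + 1) * (s 1 * s 1 ^ m))"
  unfolding ssh_def sh_index_set_one by (simp add: fun_eq_iff)

lemma ssh_term_sh_cons:
  assumes "1 \<le> q"
  shows "ssh_term (Suc q) s (sh_cons m mm)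
    = 1 / (of_nat m + 1) * (s 1 ^ (m - mm 1) * ssh_term q (\<lambda>i. s (Suc i)) mm)"
proof -
  have "(\<Prod>i\<in>{1..<Suc q}. s i ^ (sh_cons m mm i - sh_cons m mm (Suc i)))
      = s 1 ^ (m - mm 1) * (\<Prod>i\<in>{Suc 1..<Suc q}. s i ^ (sh_cons m mm i - sh_cons m mm (Suc i)))"
    using assms by (subst prod.atLeast_Suc_lessThan) (auto simp: sh_cons_def)
  also have "(\<Prod>i\<in>{Suc 1..<Suc q}. s i ^ (sh_cons m mm i - sh_cons m mm (Suc i)))
      = (\<Prod>i\<in>{1..<q}. s (Suc i) ^ (sh_cons m mm (Suc i) - sh_cons m mm (Suc (Suc i))))"
    by (rule prod.shift_bounds_Suc_ivl)
  also have "\<dots> = (\<Prod>i\<in>{1..<q}. s (Suc i) ^ (mm i - mm (Suc i)))"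
    by (intro prod.cong) (auto simp: sh_cons_def)
  finally have num: "(\<Prod>i\<in>{1..<Suc q}. s i ^ (sh_cons m mm i - sh_cons m mm (Suc i)))
      = s 1 ^ (m - mm 1) * (\<Prod>i\<in>{1..<q}. s (Suc i) ^ (mm i - mm (Suc i)))" .
  have "(\<Prod>i\<in>{1..Suc q}. (of_nat (sh_cons m mm i + 1) :: complex))
      = (of_nat m + 1) * (\<Prod>i\<in>{Suc 1..Suc q}. of_nat (sh_cons m mm i + 1))"
    by (subst prod.atLeast_Suc_atMost) (auto simp: sh_cons_def)
  also have "(\<Prod>i\<in>{Suc 1..Suc q}. (of_nat (sh_cons m mm i + 1) :: complex))
      = (\<Prod>i\<in>{1..q}. of_nat (sh_cons m mm (Suc i) + 1))"
    by (rule prod.shift_bounds_cl_Suc_ivl)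
  also have "\<dots> = (\<Prod>i\<in>{1..q}. of_nat (mm i + 1))"
    by (intro prod.cong) (auto simp: sh_cons_def)
  finally have den: "(\<Prod>i\<in>{1..Suc q}. (of_nat (sh_cons m mm i + 1) :: complex))
      = (of_nat m + 1) * (\<Prod>i\<in>{1..q}. of_nat (mm i + 1))" .
  have "sh_cons m mm (Suc q) = mm q"
    using assms by (simp add: sh_cons_def)
  with num den show ?thesis
    unfolding ssh_term_def by (simp add: field_simps)
qed

lemma ssh_Suc:
  assumes "1 \<le> q"
  shows "ssh (Suc q) s m = 1 / (of_nat m + 1) * geom_conv (s 1) (ssh q (\<lambda>i. s (Suc i))) m"
proof -
  have "ssh (Suc q) s m
      = (\<Sum>x\<in>(SIGMA k:{..m}. sh_index_set q k). ssh_term (Suc q) s ((\<lambda>(k, mm). sh_cons m mm) x))"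
    unfolding ssh_eq_sum_ssh_term sh_index_set_Suc[OF assms]
    by (rule sum.reindex[OF inj_on_sh_cons, unfolded comp_def])
  also have "\<dots> = (\<Sum>k\<le>m. \<Sum>mm\<in>sh_index_set q k.
      1 / (of_nat m + 1) * (s 1 ^ (m - mm 1) * ssh_term q (\<lambda>i. s (Suc i)) mm))"
    using finite_sh_index_set[OF assms]
    by (subst sum.Sigma) (auto intro!: sum.cong simp: case_prod_beta ssh_term_sh_cons[OF assms])
  also have "\<dots> = (\<Sum>k\<le>m. \<Sum>mm\<in>sh_index_set q k.
      1 / (of_nat m + 1) * (s 1 ^ (m - k) * ssh_term q (\<lambda>i. s (Suc i)) mm))"
    by (intro sum.cong refl) (simp add: sh_index_set_def)
  also have "\<dots> = 1 / (of_nat m + 1) * geom_conv (s 1) (ssh q (\<lambda>i. s (Suc i))) m"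
    by (simp add: geom_conv_def ssh_eq_sum_ssh_term sum_distrib_left)
  finally show ?thesis .
qed

lemma diff_decay_ssh:
  assumes "1 \<le> p" "\<forall>i\<in>{1..p}. norm (s i) < 1 \<or> s i = 1"
  shows "diff_decay 1 (ssh p s)"
  using assms
proof (induction p arbitrary: s rule: dec_induct)
  case base
  have "diff_decay (1 + 0) (\<lambda>m. 1 / (of_nat m + 1) * (s 1 * s 1 ^ m))"
    using base by (intro diff_decay_mult diff_decay_inverse diff_decay_cmult diff_decay_power) auto
  then show ?case unfolding ssh_one by simp
next
  case (step q)
  have IH: "diff_decay 1 (ssh q (\<lambda>i. s (Suc i)))"
    using step.prems by (intro step.IH) auto
  \<comment> \<open>For \<open>s\<^sub>1 = 1\<close> the convolution is a partial sum, which costs one order of decay.\<close>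
  have "diff_decay 0 (geom_conv (s 1) (ssh q (\<lambda>i. s (Suc i))))"
  proof (cases "s 1 = 1")
    case True
    then show ?thesis using diff_decay_partial_sums[OF IH] by (simp add: geom_conv_def[abs_def])
  next
    case False
    then have "norm (s 1) < 1" using step.prems by auto
    then show ?thesis by (intro diff_decay_mono[OF diff_decay_geom_conv[OF _ IH]]) auto
  qed
  then have "diff_decay (1 + 0)
      (\<lambda>m. 1 / (of_nat m + 1) * geom_conv (s 1) (ssh q (\<lambda>i. s (Suc i))) m)"
    by (intro diff_decay_mult diff_decay_inverse)
  then show ?case by (simp add: ssh_Suc[OF \<open>1 \<le> q\<close>])
qed

theorem corollary3p4:
  fixes p l :: nat and s :: "nat \<Rightarrow> complex"
  assumes "p \<ge> 1"
    and "\<forall>i\<in>{1..p}. norm (s i) < 1 \<or> s i = 1"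
  shows "\<forall>eps>0. (\<lambda>m. norm ((fwd_diff ^^ l) (ssh p s) m))
           \<in> O[at_top](\<lambda>m. real m powr (- (real l + 1 - eps)))"
  using diff_decay_imp_bigo[OF diff_decay_ssh[OF assms]] by blast

end
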